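(* Let $\mathsf C=(C_1,\dots,C_n)$ be an $n$-outcome observable on a Hilbert space $\mathcal H_d$ of finite dimension $d$. Then $$\sup_{\mathsf A}\|\mathsf C-\mathsf A\|=2\big(1-b(\mathsf C)\big),$$ where the supremum is over all $n$-outcome observables $\mathsf A=(A_1,\dots,A_n)$ on $\mathcal H_d$ and $\|\mathsf C-\mathsf A\|=\sup_{\varrho}\sum_{j=1}^n|\operatorname{tr}(\varrho(C_j-A_j))|$, the supremum being over density operators $\varrho$ on $\mathcal H_d$.
   Context: An $n$-outcome observable on $\mathcal H_d$ is an $n$-tuple of positive operators summing to $I$; these form a convex set $Z$ under componentwise convex combination. The norm $\|\cdot\|$ above is the base norm (equivalently completely bounded norm) for observables. For $x,y\in Z$, the weight function is $t_y(x)=\sup\{0\leq t<1 : \frac{y-tx}{1-t}\in Z\}$, and the boundariness of $y$ is $b(y)=\inf_{x\in Z}t_y(x)$. (Here $b(\mathsf C)$ equals the smallest eigenvalue among all $C_j$.) *)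

theory Defs
  imports "Jordan_Normal_Form.Schur_Decomposition"
begin

text \<open>Operators on H_d = C^d are d x d complex matrices.\<close>

definition mtrace :: "complex mat \<Rightarrow> complex" where
  "mtrace A = (\<Sum>i<dim_row A. A $$ (i, i))"

definition positive_op :: "nat \<Rightarrow> complex mat \<Rightarrow> bool" where
  "positive_op d A \<longleftrightarrow> A \<in> carrier_mat d d \<and> mat_adjoint A = A \<and>
     (\<forall>v \<in> carrier_vec d. Im (conjugate v \<bullet> (A *\<^sub>v v)) = 0 \<and>
                            0 \<le> Re (conjugate v \<bullet> (A *\<^sub>v v)))"

definition density_op :: "nat \<Rightarrow> complex mat \<Rightarrow> bool" where
  "density_op d \<rho> \<longleftrightarrow> positive_op d \<rho> \<and> mtrace \<rho> = 1"

fun msum :: "nat \<Rightarrow> nat \<Rightarrow> (nat \<Rightarrow> complex mat) \<Rightarrow> complex mat" where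
  "msum d 0 A = 0\<^sub>m d d"
| "msum d (Suc n) A = msum d n A + A n"

text \<open>An n-outcome observable on C^d: components A 0, ..., A (n-1)
  (indices \<ge> n are irrelevant), positive, summing to the identity.\<close>
definition observable :: "nat \<Rightarrow> nat \<Rightarrow> (nat \<Rightarrow> complex mat) \<Rightarrow> bool" where
  "observable d n A \<longleftrightarrow> (\<forall>j<n. positive_op d (A j)) \<and>
     msum d n A = 1\<^sub>m d"

definition obs_dist :: "nat \<Rightarrow> nat \<Rightarrow> (nat \<Rightarrow> complex mat) \<Rightarrow> (nat \<Rightarrow> complex mat) \<Rightarrow> real" where
  "obs_dist d n C A =
     (SUP \<rho> \<in> {\<rho>. density_op d \<rho>}. \<Sum>j<n. cmod (mtrace (\<rho> * (C j - A j))))"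

definition weight :: "nat \<Rightarrow> nat \<Rightarrow> (nat \<Rightarrow> complex mat) \<Rightarrow> (nat \<Rightarrow> complex mat) \<Rightarrow> real" where
  "weight d n y x =
     Sup {t::real. 0 \<le> t \<and> t < 1 \<and>
        observable d n (\<lambda>j. (1 / (1 - t)) \<cdot>\<^sub>m (y j - t \<cdot>\<^sub>m x j))}"

definition boundariness :: "nat \<Rightarrow> nat \<Rightarrow> (nat \<Rightarrow> complex mat) \<Rightarrow> real" where
  "boundariness d n y = (INF x \<in> {x. observable d n x}. weight d n y x)"

end

theory Submission
  imports Defs
begin

(* Let m be the infimum of the Rayleigh quotients <v, C_j v> / <v, v>, i.e. the smallest eigenvalue
   occurring among the C_j; both sides of the identity equal 2 (1 - m).

   For a state rho the numbers tr(rho C_j) and tr(rho A_j) form probability vectors, the former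
   bounded below by m, so that sum_j |tr(rho (C_j - A_j))| <= 2 - 2m. The bound is approached by the
   deterministic observable A = (0, .., I, .., 0) sitting at an outcome j together with the pure
   state of a vector v whose Rayleigh quotient for C_j is close to m. Similarly, (C - t X) / (1 - t)
   is an observable for every observable X as long as t <= m, whereas for the deterministic X at j
   it stops being one once t exceeds the Rayleigh quotient of C_j at v; hence b(C) = m.

   That tr(rho M) >= 0 for positive rho and M follows from a Gram decomposition
   rho = sum_u u u^*, obtained by repeatedly splitting off Schur complements. *)

lemma sum_lessThan_two_support:
  fixes N :: nat
  assumes "i < N" "j < N" "i \<noteq> j" "\<And>k. k \<noteq> i \<Longrightarrow> k \<noteq> j \<Longrightarrow> h k = 0"
  shows "(\<Sum>k<N. h k) = h i + h j"
proof -
  have "(\<Sum>k\<in>{i,j}. h k) = (\<Sum>k<N. h k)"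
    by (rule sum.mono_neutral_left) (use assms in auto)
  then show ?thesis using assms(3) by simp
qed

lemma sum_lessThan_one_support:
  fixes N :: nat
  assumes "j < N" "\<And>k. k \<noteq> j \<Longrightarrow> h k = 0"
  shows "(\<Sum>k<N. h k) = h j"
proof -
  have "(\<Sum>k<N. h k) = (\<Sum>k<N. if k = j then h j else 0)"
    using assms(2) by (intro sum.cong) auto
  then show ?thesis using assms(1) by simp
qed

lemma sum_abs_diff_le:
  fixes c a :: "nat \<Rightarrow> real"
  assumes c: "\<And>j. j < n \<Longrightarrow> m \<le> c j" and a: "\<And>j. j < n \<Longrightarrow> 0 \<le> a j"
    and sc: "(\<Sum>j<n. c j) = 1" and sa: "(\<Sum>j<n. a j) = 1" and m: "0 \<le> m" "m \<le> 1"
  shows "(\<Sum>j<n. \<bar>c j - a j\<bar>) \<le> 2 - 2 * m"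
proof -
  have "\<bar>c j - a j\<bar> \<le> c j + a j - 2 * (m * a j)" if j: "j < n" for j
  proof -
    have "a j \<le> 1" unfolding sa[symmetric]
      by (rule member_le_sum) (use a j in auto)
    then have "m * a j \<le> a j" "m * a j \<le> m"
      using mult_right_mono[OF m(2) a[OF j]] mult_left_mono[of "a j" 1 m] m by auto
    then show ?thesis using c[OF j] by linarith
  qed
  then have "(\<Sum>j<n. \<bar>c j - a j\<bar>) \<le> (\<Sum>j<n. c j + a j - 2 * (m * a j))"
    by (intro sum_mono) auto
  also have "\<dots> = 2 - 2 * m"
    by (simp add: sum.distrib sum_subtractf sum_distrib_left[symmetric] sc sa)
  finally show ?thesis .
qed

section \<open>Positive semidefinite kernels\<close>

definition hermitian_kernel :: "nat \<Rightarrow> (nat \<Rightarrow> nat \<Rightarrow> complex) \<Rightarrow> bool" where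
  "hermitian_kernel N f \<longleftrightarrow> (\<forall>i<N. \<forall>k<N. f k i = cnj (f i k))"

definition kernel_form :: "nat \<Rightarrow> (nat \<Rightarrow> nat \<Rightarrow> complex) \<Rightarrow> (nat \<Rightarrow> complex) \<Rightarrow> complex" where
  "kernel_form N f x = (\<Sum>i<N. \<Sum>k<N. cnj (x i) * f i k * x k)"

definition psd_kernel :: "nat \<Rightarrow> (nat \<Rightarrow> nat \<Rightarrow> complex) \<Rightarrow> bool" where
  "psd_kernel N f \<longleftrightarrow> hermitian_kernel N f \<and> (\<forall>x. 0 \<le> Re (kernel_form N f x))"

lemma psd_kernel_offdiag_zero:
  assumes psd: "psd_kernel N f" and ij: "i < N" "j < N" "i \<noteq> j" and fjj: "f j j = 0"
  shows "f i j = 0"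
proof (rule ccontr)
  assume nz: "f i j \<noteq> 0"
  \<comment> \<open>Test against e_i + t e_j with t a large negative multiple of cnj (f i j).\<close>
  define c where "c = cmod (f i j)"
  define M where "M = (\<bar>Re (f i i)\<bar> + 1) / (2 * c^2)"
  define t where "t = - complex_of_real M * cnj (f i j)"
  define x where "x = (\<lambda>k. if k = i then 1 else if k = j then t else 0)"
  have c: "c > 0" using nz by (simp add: c_def)
  have fji: "f j i = cnj (f i j)"
    using psd ij unfolding psd_kernel_def hermitian_kernel_def by blast
  have sq: "f i j * cnj (f i j) = complex_of_real (c^2)"
    unfolding c_def complex_norm_square ..
  have row: "(\<Sum>k<N. cnj (x a) * f a k * x k) = cnj (x a) * f a i + cnj (x a) * f a j * t" for a
    by (subst sum_lessThan_two_support[OF ij]) (use ij in \<open>simp_all add: x_def\<close>)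
  have "kernel_form N f x = f i i + f i j * t + cnj t * f j i"
    unfolding kernel_form_def row
    by (subst sum_lessThan_two_support[OF ij]) (use ij fjj in \<open>simp_all add: x_def\<close>)
  moreover have "f i j * t = - complex_of_real (M * c^2)" "cnj t * f j i = - complex_of_real (M * c^2)"
    unfolding fji t_def by (simp_all add: mult_ac sq)
  ultimately have "Re (kernel_form N f x) = Re (f i i) - 2 * (M * c^2)" by simp
  also have "\<dots> < 0" using c by (simp add: M_def)
  finally show False using psd by (simp add: psd_kernel_def not_le[symmetric])
qed

lemma psd_kernel_diag_nonneg:
  assumes psd: "psd_kernel N f" and j: "j < N"
  shows "0 \<le> f j j"
proof -
  define x :: "nat \<Rightarrow> complex" where "x k = (if k = j then 1 else 0)" for k
  have row: "(\<Sum>k<N. cnj (x a) * f a k * x k) = cnj (x a) * f a j" for a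
    by (subst sum_lessThan_one_support[OF j]) (simp_all add: x_def)
  have "kernel_form N f x = f j j"
    unfolding kernel_form_def row by (subst sum_lessThan_one_support[OF j]) (simp_all add: x_def)
  then have "0 \<le> Re (f j j)"
    using psd unfolding psd_kernel_def by metis
  moreover have "f j j = cnj (f j j)"
    using psd j unfolding psd_kernel_def hermitian_kernel_def by blast
  then have "Im (f j j) = - Im (f j j)"
    by (metis cnj.sel(2))
  ultimately show ?thesis
    by (simp add: less_eq_complex_def)
qed

lemma psd_kernel_diag_zero:
  assumes psd: "psd_kernel N f" and ij: "i < N" "j < N" and fjj: "f j j = 0"
  shows "f i j = 0" "f j i = 0"
proof -
  show "f i j = 0"
    using psd_kernel_offdiag_zero[OF psd ij _ fjj] fjj by (cases "i = j") auto
  moreover have "f j i = cnj (f i j)"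
    using psd ij unfolding psd_kernel_def hermitian_kernel_def by blast
  ultimately show "f j i = 0" by simp
qed

text \<open>If \<open>f N N = 0\<close> the correction term vanishes, as division by zero yields \<open>0\<close>.\<close>
lemma kernel_form_schur_complement:
  fixes x :: "nat \<Rightarrow> complex"
  assumes herm: "hermitian_kernel (Suc N) f"
  defines "t \<equiv> - (\<Sum>k<N. f N k * x k) / f N N"
  shows "kernel_form N (\<lambda>i k. f i k - f i N * f N k / f N N) x = kernel_form (Suc N) f (x(N := t))"
    (is "kernel_form N ?g x = _")
proof -
  define p where "p = f N N"
  define s where "s = (\<Sum>k<N. f N k * x k)"
  define Q where "Q = kernel_form N f x"
  have herm_at: "f k i = cnj (f i k)" if "i < Suc N" "k < Suc N" for i k
    using herm that unfolding hermitian_kernel_def by blast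
  have pcnj: "cnj p = p"
    unfolding p_def by (rule sym, rule herm_at) simp_all
  have fN: "cnj (f N i) = f i N" if "i < N" for i
    using herm_at[of N i] that by simp
  have as: "(\<Sum>i<N. cnj (x i) * f i N) = cnj s"
    unfolding s_def cnj_sum by (intro sum.cong refl) (simp add: fN mult.commute)
  have "kernel_form N ?g x
      = (\<Sum>i<N. \<Sum>k<N. cnj (x i) * f i k * x k - (cnj (x i) * f i N) * (f N k * x k) / p)"
    unfolding kernel_form_def p_def by (intro sum.cong) (auto simp: algebra_simps)
  also have "\<dots> = Q - (\<Sum>i<N. cnj (x i) * f i N) * s / p"
    unfolding Q_def kernel_form_def s_def
    by (simp add: sum_subtractf sum_distrib_left sum_distrib_right sum_divide_distrib)
      (rule sum.swap)
  also have "\<dots> = Q + (\<Sum>i<N. cnj (x i) * f i N) * t + cnj t * s + cnj t * p * t"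
    using pcnj unfolding as t_def p_def[symmetric] s_def[symmetric]
    by (cases "p = 0") (simp_all add: field_simps)
  also have "\<dots> = kernel_form (Suc N) f (x(N := t))"
  proof -
    have "kernel_form (Suc N) f (x(N := t))
        = (\<Sum>i<N. (\<Sum>k<N. cnj (x i) * f i k * x k) + cnj (x i) * f i N * t)
          + ((\<Sum>k<N. cnj t * f N k * x k) + cnj t * p * t)"
      by (simp add: kernel_form_def p_def)
    then show ?thesis
      by (simp add: Q_def kernel_form_def s_def p_def sum.distrib sum_distrib_left sum_distrib_right mult.assoc)
  qed
  finally show ?thesis .
qed

lemma psd_kernel_schur_complement:
  assumes psd: "psd_kernel (Suc N) f"
  shows "psd_kernel N (\<lambda>i k. f i k - f i N * f N k / f N N)"
proof -
  have herm: "hermitian_kernel (Suc N) f"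
    using psd by (simp add: psd_kernel_def)
  have herm_at: "f k i = cnj (f i k)" if "i < Suc N" "k < Suc N" for i k
    using herm that unfolding hermitian_kernel_def by blast
  have pcnj: "cnj (f N N) = f N N"
    by (rule sym, rule herm_at) simp_all
  have "hermitian_kernel N (\<lambda>i k. f i k - f i N * f N k / f N N)"
    unfolding hermitian_kernel_def
  proof (intro allI impI)
    fix i k assume "i < N" "k < N"
    then have "f k i = cnj (f i k)" "f N i = cnj (f i N)" "f k N = cnj (f N k)"
      by (auto intro: herm_at)
    then show "f k i - f k N * f N i / f N N = cnj (f i k - f i N * f N k / f N N)"
      using pcnj by (simp add: mult.commute)
  qed
  then show ?thesis
    using psd kernel_form_schur_complement[OF herm] unfolding psd_kernel_def by metis
qed

lemma psd_kernel_last_column_outer: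
  assumes psd: "psd_kernel (Suc N) f" and ik: "i < Suc N" "k < Suc N"
  defines "u \<equiv> \<lambda>i. f i N / complex_of_real (sqrt (Re (f N N)))"
  shows "u i * cnj (u k) = f i N * f N k / f N N"
proof (cases "f N N = 0")
  case True
  then show ?thesis
    using psd_kernel_diag_zero(1)[OF psd ik(1) _ True] psd_kernel_diag_zero(2)[OF psd ik(2) _ True]
    by (simp add: u_def)
next
  case False
  have "f N k = cnj (f k N)"
    using psd ik unfolding psd_kernel_def hermitian_kernel_def by blast
  moreover obtain r where r: "f N N = complex_of_real r" "0 \<le> r"
    using psd_kernel_diag_nonneg[OF psd, of N]
    by (intro that[of "Re (f N N)"]) (auto simp: less_eq_complex_def complex_eq_iff)
  ultimately show ?thesis
    using False by (simp add: u_def flip: of_real_mult)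
qed

lemma psd_kernel_gram_decomposition:
  assumes "psd_kernel N f"
  shows "\<exists>us. \<forall>i<N. \<forall>k<N. f i k = (\<Sum>u\<leftarrow>us. u i * cnj (u k))"
  using assms
proof (induction N arbitrary: f)
  case 0
  then show ?case by simp
next
  case (Suc N)
  \<comment> \<open>The last column, scaled by the inverse square root of the pivot, splits off a rank-one part;
    the rest is the Schur complement.\<close>
  define u where "u i = f i N / complex_of_real (sqrt (Re (f N N)))" for i
  have outer: "u i * cnj (u k) = f i N * f N k / f N N" if "i < Suc N" "k < Suc N" for i k
    using psd_kernel_last_column_outer[OF Suc.prems that] unfolding u_def .
  obtain vs where vs: "\<forall>i<N. \<forall>k<N. f i k - f i N * f N k / f N N = (\<Sum>v\<leftarrow>vs. v i * cnj (v k))"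
    using Suc.IH[OF psd_kernel_schur_complement[OF Suc.prems]] by blast
  define us where "us = u # map (\<lambda>v. v(N := 0)) vs"
  have "f i k = (\<Sum>w\<leftarrow>us. w i * cnj (w k))" if ik: "i < Suc N" "k < Suc N" for i k
  proof (cases "i = N \<or> k = N")
    case True
    have "(\<Sum>v\<leftarrow>vs. (v(N := 0)) i * cnj ((v(N := 0)) k)) = 0"
      using True by (induction vs) auto
    moreover have "f i k = f i N * f N k / f N N"
    proof (cases "f N N = 0")
      case zero: True
      then have "f i N = 0" "f N k = 0"
        using psd_kernel_diag_zero(1)[OF Suc.prems ik(1) _ zero]
          psd_kernel_diag_zero(2)[OF Suc.prems ik(2) _ zero] by simp_all
      then show ?thesis using True by auto
    next
      case False
      then show ?thesis using True by auto
    qed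
    ultimately show ?thesis
      using outer[OF ik] by (simp add: us_def o_def)
  next
    case False
    then have "f i k - f i N * f N k / f N N = (\<Sum>v\<leftarrow>vs. (v(N := 0)) i * cnj ((v(N := 0)) k))"
      using vs ik by (simp add: o_def)
    then show ?thesis
      using outer[OF ik] by (simp add: us_def o_def algebra_simps)
  qed
  then show ?case by blast
qed

section \<open>Quadratic forms and traces of matrices\<close>

abbreviation qform :: "complex mat \<Rightarrow> complex vec \<Rightarrow> complex" where
  "qform A v \<equiv> conjugate v \<bullet> (A *\<^sub>v v)"

lemma positive_op_iff:
  "positive_op d A \<longleftrightarrow>
     A \<in> carrier_mat d d \<and> mat_adjoint A = A \<and> (\<forall>v \<in> carrier_vec d. 0 \<le> qform A v)"
  by (auto simp: positive_op_def less_eq_complex_def)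

lemma qform_expand:
  assumes "A \<in> carrier_mat d d" "v \<in> carrier_vec d"
  shows "qform A v = (\<Sum>i<d. \<Sum>k<d. cnj (v$i) * A$$(i,k) * v$k)"
  using assms
  by (auto simp: scalar_prod_def sum_distrib_left mult.assoc lessThan_atLeast0 intro!: sum.cong)

lemma mat_adjoint_index:
  assumes "A \<in> carrier_mat d d" "i < d" "k < d"
  shows "mat_adjoint A $$ (i,k) = cnj (A $$ (k,i))"
  using assms by (simp add: mat_adjoint_def mat_of_rows_def)

lemma mat_adjoint_eq_iff:
  assumes "A \<in> carrier_mat d d"
  shows "mat_adjoint A = A \<longleftrightarrow> hermitian_kernel d (\<lambda>i k. A $$ (i,k))"
proof
  assume adj: "mat_adjoint A = A"
  show "hermitian_kernel d (\<lambda>i k. A $$ (i,k))"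
    unfolding hermitian_kernel_def
  proof (intro allI impI)
    fix i k assume "i < d" "k < d"
    then show "A $$ (k,i) = cnj (A $$ (i,k))"
      using mat_adjoint_index[OF assms, of k i] adj by simp
  qed
next
  assume herm: "hermitian_kernel d (\<lambda>i k. A $$ (i,k))"
  show "mat_adjoint A = A"
  proof (rule eq_matI)
    fix i k assume "i < dim_row A" "k < dim_col A"
    then have ik: "i < d" "k < d" using assms by auto
    then have "A $$ (i,k) = cnj (A $$ (k,i))"
      using herm unfolding hermitian_kernel_def by blast
    then show "mat_adjoint A $$ (i,k) = A $$ (i,k)"
      using mat_adjoint_index[OF assms ik] by simp
  qed (use assms in \<open>auto simp: mat_adjoint_def mat_of_rows_def\<close>)
qed

lemma positive_op_psd_kernel:
  assumes "positive_op d A"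
  shows "psd_kernel d (\<lambda>i k. A $$ (i,k))"
proof -
  have A: "A \<in> carrier_mat d d" "mat_adjoint A = A" "\<forall>v \<in> carrier_vec d. 0 \<le> qform A v"
    using assms by (auto simp: positive_op_iff)
  have "0 \<le> Re (kernel_form d (\<lambda>i k. A $$ (i,k)) x)" for x
  proof -
    have "kernel_form d (\<lambda>i k. A $$ (i,k)) x = qform A (vec d x)"
      unfolding kernel_form_def qform_expand[OF A(1) vec_carrier] by (intro sum.cong) auto
    then show ?thesis using A(3) by (simp add: less_eq_complex_def)
  qed
  then show ?thesis using A(1,2) mat_adjoint_eq_iff by (auto simp: psd_kernel_def)
qed

lemma mtrace_mult_expand:
  assumes "A \<in> carrier_mat d d" "B \<in> carrier_mat d d"
  shows "mtrace (A * B) = (\<Sum>i<d. \<Sum>k<d. A$$(i,k) * B$$(k,i))"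
  using assms unfolding mtrace_def
  by (auto simp: scalar_prod_def lessThan_atLeast0 intro!: sum.cong)

lemma mtrace_positive_mult_nonneg:
  assumes \<rho>: "positive_op d \<rho>" and M: "M \<in> carrier_mat d d"
    and M_nonneg: "\<forall>v\<in>carrier_vec d. 0 \<le> qform M v"
  shows "0 \<le> mtrace (\<rho> * M)"
proof -
  have \<rho>_carrier: "\<rho> \<in> carrier_mat d d" using \<rho> by (simp add: positive_op_def)
  obtain us where us: "\<forall>i<d. \<forall>k<d. \<rho>$$(i,k) = (\<Sum>u\<leftarrow>us. u i * cnj (u k))"
    using psd_kernel_gram_decomposition[OF positive_op_psd_kernel[OF \<rho>]] by blast
  have "mtrace (\<rho> * M) = (\<Sum>i<d. \<Sum>k<d. (\<Sum>u\<leftarrow>us. u i * cnj (u k)) * M$$(k,i))"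
    unfolding mtrace_mult_expand[OF \<rho>_carrier M] using us by (intro sum.cong) auto
  also have "\<dots> = (\<Sum>u\<leftarrow>us. \<Sum>i<d. \<Sum>k<d. u i * cnj (u k) * M$$(k,i))"
    by (induction us) (auto simp: sum.distrib algebra_simps)
  also have "\<dots> = (\<Sum>u\<leftarrow>us. qform M (vec d u))"
  proof (intro arg_cong[where f = sum_list] map_cong refl)
    fix u :: "nat \<Rightarrow> complex"
    have "qform M (vec d u) = (\<Sum>k<d. \<Sum>i<d. cnj (u k) * M$$(k,i) * u i)"
      unfolding qform_expand[OF M vec_carrier] by (intro sum.cong) auto
    also have "\<dots> = (\<Sum>i<d. \<Sum>k<d. u i * cnj (u k) * M$$(k,i))"
      by (subst sum.swap) (simp add: mult_ac)
    finally show "(\<Sum>i<d. \<Sum>k<d. u i * cnj (u k) * M$$(k,i)) = qform M (vec d u)" ..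
  qed
  also have "0 \<le> \<dots>"
    using M_nonneg by (intro sum_list_nonneg) auto
  finally show ?thesis .
qed

lemma cscalar_self_nonneg:
  fixes v :: "complex vec"
  shows "v \<in> carrier_vec d \<Longrightarrow> 0 \<le> conjugate v \<bullet> v"
  using conjugate_square_ge_0_vec[of v] conjugate_vec_sprod_comm[of v d v] by simp

lemma cscalar_self_pos:
  fixes v :: "complex vec"
  shows "v \<in> carrier_vec d \<Longrightarrow> v \<noteq> 0\<^sub>v d \<Longrightarrow> 0 < conjugate v \<bullet> v"
  using conjugate_square_greater_0_vec[of v d] conjugate_vec_sprod_comm[of v d v] by simp

lemma qform_smult:
  assumes "A \<in> carrier_mat d d" "v \<in> carrier_vec d"
  shows "qform (c \<cdot>\<^sub>m A) v = c * qform A v"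
  using assms unfolding qform_expand[OF smult_carrier_mat[OF assms(1)] assms(2)] qform_expand[OF assms]
  by (simp add: sum_distrib_left mult_ac)

lemma qform_minus:
  assumes "A \<in> carrier_mat d d" "B \<in> carrier_mat d d" "v \<in> carrier_vec d"
  shows "qform (A - B) v = qform A v - qform B v"
  using assms unfolding qform_expand[OF minus_carrier_mat[OF assms(2)] assms(3)]
    qform_expand[OF assms(1,3)] qform_expand[OF assms(2,3)]
  by (simp add: algebra_simps sum_subtractf)

lemma msum_carrier: "\<forall>j<n. A j \<in> carrier_mat d d \<Longrightarrow> msum d n A \<in> carrier_mat d d"
  by (induction n) auto

lemma msum_index:
  assumes "\<forall>j<n. A j \<in> carrier_mat d d" "i < d" "k < d"
  shows "msum d n A $$ (i,k) = (\<Sum>j<n. A j $$ (i,k))"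
  using assms
proof (induction n)
  case (Suc n)
  have "A n \<in> carrier_mat d d"
    using Suc.prems(1) by simp
  then have "(msum d n A + A n) $$ (i,k) = msum d n A $$ (i,k) + A n $$ (i,k)"
    using Suc.prems by (subst index_add_mat(1)) auto
  then show ?case using Suc by simp
qed simp

lemma qform_msum:
  assumes "\<forall>j<n. A j \<in> carrier_mat d d" "v \<in> carrier_vec d"
  shows "qform (msum d n A) v = (\<Sum>j<n. qform (A j) v)"
proof -
  have "qform (msum d n A) v = (\<Sum>i<d. \<Sum>k<d. cnj (v$i) * (\<Sum>j<n. A j $$ (i,k)) * v$k)"
    unfolding qform_expand[OF msum_carrier[OF assms(1)] assms(2)]
    by (intro sum.cong refl) (simp add: msum_index[OF assms(1)])
  also have "\<dots> = (\<Sum>j<n. \<Sum>i<d. \<Sum>k<d. cnj (v$i) * A j $$ (i,k) * v$k)"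
    by (simp add: sum_distrib_left sum_distrib_right sum.swap[of _ "{..<n}"])
  also have "\<dots> = (\<Sum>j<n. qform (A j) v)"
    using assms by (auto intro!: sum.cong simp: qform_expand)
  finally show ?thesis .
qed

lemma mtrace_mult_msum:
  assumes "\<forall>j<n. A j \<in> carrier_mat d d" "\<rho> \<in> carrier_mat d d"
  shows "mtrace (\<rho> * msum d n A) = (\<Sum>j<n. mtrace (\<rho> * A j))"
proof -
  have "mtrace (\<rho> * msum d n A) = (\<Sum>i<d. \<Sum>k<d. \<rho>$$(i,k) * (\<Sum>j<n. A j $$ (k,i)))"
    unfolding mtrace_mult_expand[OF assms(2) msum_carrier[OF assms(1)]]
    by (intro sum.cong refl) (simp add: msum_index[OF assms(1)])
  also have "\<dots> = (\<Sum>j<n. \<Sum>i<d. \<Sum>k<d. \<rho>$$(i,k) * A j $$ (k,i))"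
    by (simp add: sum_distrib_left sum.swap[of _ "{..<n}"])
  also have "\<dots> = (\<Sum>j<n. mtrace (\<rho> * A j))"
    using assms by (auto intro!: sum.cong simp: mtrace_mult_expand)
  finally show ?thesis .
qed

lemma mtrace_mult_minus:
  assumes "\<rho> \<in> carrier_mat d d" "A \<in> carrier_mat d d" "B \<in> carrier_mat d d"
  shows "mtrace (\<rho> * (A - B)) = mtrace (\<rho> * A) - mtrace (\<rho> * B)"
  using assms unfolding mtrace_mult_expand[OF assms(1) minus_carrier_mat[OF assms(3)]]
    mtrace_mult_expand[OF assms(1,2)] mtrace_mult_expand[OF assms(1,3)]
  by (simp add: algebra_simps sum_subtractf)

lemma mtrace_mult_smult:
  "\<rho> \<in> carrier_mat d d \<Longrightarrow> A \<in> carrier_mat d d \<Longrightarrow> mtrace (\<rho> * (c \<cdot>\<^sub>m A)) = c * mtrace (\<rho> * A)"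
  by (simp add: mtrace_mult_expand[of _ d] sum_distrib_left mult_ac)

lemma mtrace_mult_zero: "\<rho> \<in> carrier_mat d d \<Longrightarrow> mtrace (\<rho> * 0\<^sub>m d d) = 0"
  by (simp add: mtrace_def)

section \<open>Pure states and observables\<close>

definition pure_state :: "nat \<Rightarrow> complex vec \<Rightarrow> complex mat" where
  "pure_state d v = mat d d (\<lambda>(i,k). v$i * cnj (v$k) / (conjugate v \<bullet> v))"

lemma pure_state_carrier: "pure_state d v \<in> carrier_mat d d"
  by (simp add: pure_state_def)

lemma mtrace_pure_state_mult:
  assumes v: "v \<in> carrier_vec d" and M: "M \<in> carrier_mat d d"
  shows "mtrace (pure_state d v * M) = qform M v / (conjugate v \<bullet> v)"
proof -
  have "mtrace (pure_state d v * M)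
      = (\<Sum>i<d. \<Sum>k<d. v$i * cnj (v$k) / (conjugate v \<bullet> v) * M$$(k,i))"
    unfolding mtrace_mult_expand[OF pure_state_carrier M] by (simp add: pure_state_def)
  also have "\<dots> = (\<Sum>k<d. \<Sum>i<d. cnj (v$k) * M$$(k,i) * v$i) / (conjugate v \<bullet> v)"
    by (subst sum.swap) (simp add: sum_divide_distrib mult_ac)
  finally show ?thesis unfolding qform_expand[OF M v] .
qed

lemma density_op_pure_state:
  assumes v: "v \<in> carrier_vec d" and nz: "v \<noteq> 0\<^sub>v d"
  shows "density_op d (pure_state d v)"
proof -
  define r where "r = Re (conjugate v \<bullet> v)"
  have c: "conjugate v \<bullet> v = complex_of_real r" and r: "r > 0"
    using cscalar_self_pos[OF v nz] by (auto simp: r_def less_complex_def complex_eq_iff)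
  have "hermitian_kernel d (\<lambda>i k. pure_state d v $$ (i,k))"
    by (simp add: hermitian_kernel_def pure_state_def c)
  then have adj: "mat_adjoint (pure_state d v) = pure_state d v"
    using mat_adjoint_eq_iff[OF pure_state_carrier] by blast
  have "0 \<le> qform (pure_state d v) w" if w: "w \<in> carrier_vec d" for w
  proof -
    define z where "z = (\<Sum>i<d. cnj (w$i) * v$i)"
    have "qform (pure_state d v) w
        = (\<Sum>i<d. \<Sum>k<d. cnj (w$i) * (v$i * cnj (v$k) / complex_of_real r) * w$k)"
      unfolding qform_expand[OF pure_state_carrier w] by (simp add: pure_state_def c)
    also have "\<dots> = z * cnj z / complex_of_real r"
      unfolding z_def
      by (simp add: sum_distrib_left sum_distrib_right sum_divide_distrib mult_ac)
        (rule sum.swap)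
    also have "\<dots> = complex_of_real ((cmod z)^2 / r)"
      by (simp add: complex_norm_square[symmetric])
    finally show ?thesis using r by (simp add: less_eq_complex_def)
  qed
  moreover have "mtrace (pure_state d v) = 1"
    using mtrace_pure_state_mult[OF v one_carrier_mat] right_mult_one_mat[OF pure_state_carrier] c r
      one_mult_mat_vec[OF v] by simp
  ultimately show ?thesis
    unfolding density_op_def positive_op_iff using adj pure_state_carrier by blast
qed

lemma positive_op_one: "positive_op d (1\<^sub>m d)"
  unfolding positive_op_iff mat_adjoint_eq_iff[OF one_carrier_mat]
  by (auto simp: hermitian_kernel_def cscalar_self_nonneg)

lemma positive_op_zero: "positive_op d (0\<^sub>m d d)"
  unfolding positive_op_iff mat_adjoint_eq_iff[OF zero_carrier_mat]
  by (auto simp: hermitian_kernel_def qform_expand[OF zero_carrier_mat])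

definition deterministic_obs :: "nat \<Rightarrow> nat \<Rightarrow> nat \<Rightarrow> complex mat" where
  "deterministic_obs d j0 = (\<lambda>k. if k = j0 then 1\<^sub>m d else 0\<^sub>m d d)"

lemma observable_deterministic_obs:
  assumes "j0 < n"
  shows "observable d n (deterministic_obs d j0)"
proof -
  have "msum d k (deterministic_obs d j0) = (if j0 < k then 1\<^sub>m d else 0\<^sub>m d d)" for k
    by (induction k) (auto simp: deterministic_obs_def)
  then show ?thesis
    unfolding observable_def using assms positive_op_one positive_op_zero
    by (auto simp: deterministic_obs_def)
qed

lemma observable_carrier: "observable d n X \<Longrightarrow> j < n \<Longrightarrow> X j \<in> carrier_mat d d"
  by (simp add: observable_def positive_op_def)

lemma observable_qform_nonneg:
  "observable d n X \<Longrightarrow> j < n \<Longrightarrow> v \<in> carrier_vec d \<Longrightarrow> 0 \<le> qform (X j) v"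
  by (simp add: observable_def positive_op_iff)

lemma observable_qform_sum:
  assumes "observable d n X" "v \<in> carrier_vec d"
  shows "(\<Sum>j<n. qform (X j) v) = conjugate v \<bullet> v"
  using qform_msum[of n X d v] assms observable_carrier[OF assms(1)]
  by (simp add: observable_def)

lemma observable_qform_le:
  assumes "observable d n X" "j < n" "v \<in> carrier_vec d"
  shows "qform (X j) v \<le> conjugate v \<bullet> v"
proof -
  have "qform (X j) v \<le> (\<Sum>k<n. qform (X k) v)"
    by (rule member_le_sum) (use assms observable_qform_nonneg in auto)
  then show ?thesis using observable_qform_sum[OF assms(1,3)] by simp
qed

lemma observable_mtrace_nonneg:
  "observable d n X \<Longrightarrow> density_op d \<rho> \<Longrightarrow> j < n \<Longrightarrow> 0 \<le> mtrace (\<rho> * X j)"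
  by (metis density_op_def mtrace_positive_mult_nonneg observable_carrier observable_qform_nonneg)

lemma observable_mtrace_sum:
  assumes "observable d n X" "density_op d \<rho>"
  shows "(\<Sum>j<n. mtrace (\<rho> * X j)) = 1"
proof -
  have "\<rho> \<in> carrier_mat d d" using assms(2) by (simp add: density_op_def positive_op_def)
  then show ?thesis
    using mtrace_mult_msum[of n X d \<rho>] observable_carrier[OF assms(1)] assms
    by (simp add: observable_def density_op_def)
qed

lemma density_ops_nonempty:
  assumes "d \<ge> 1"
  shows "{\<rho>. density_op d \<rho>} \<noteq> {}"
proof -
  have "density_op d (pure_state d (unit_vec d 0))"
    using assms by (intro density_op_pure_state) (auto simp: vec_eq_iff)
  then show ?thesis by blast
qed

lemma mtrace_mult_deterministic_obs:
  assumes "density_op d \<rho>"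
  shows "mtrace (\<rho> * deterministic_obs d j0 k) = (if k = j0 then 1 else 0)"
  using assms right_mult_one_mat[of \<rho> d d] mtrace_mult_zero[of \<rho> d]
  by (simp add: deterministic_obs_def density_op_def positive_op_def)

lemma observable_length_pos:
  assumes "d \<ge> 1" "observable d n C"
  shows "0 < n"
proof (rule ccontr)
  assume "\<not> 0 < n"
  then have "(0\<^sub>m d d :: complex mat) $$ (0,0) = 1\<^sub>m d $$ (0,0)"
    using assms(2) by (simp add: observable_def)
  then show False using assms(1) by simp
qed

section \<open>The smallest Rayleigh quotient\<close>

definition rayleigh :: "complex mat \<Rightarrow> complex vec \<Rightarrow> real" where
  "rayleigh A v = Re (qform A v) / Re (conjugate v \<bullet> v)"

text \<open>For an observable this is the smallest eigenvalue among the \<open>C j\<close>.\<close>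
definition min_rayleigh :: "nat \<Rightarrow> nat \<Rightarrow> (nat \<Rightarrow> complex mat) \<Rightarrow> real" where
  "min_rayleigh d n C = Inf {rayleigh (C j) v | j v. j < n \<and> v \<in> carrier_vec d \<and> v \<noteq> 0\<^sub>v d}"

lemma rayleigh_le_iff:
  assumes "v \<in> carrier_vec d" "v \<noteq> 0\<^sub>v d" "Im (qform A v) = 0"
  shows "t \<le> rayleigh A v \<longleftrightarrow> complex_of_real t * (conjugate v \<bullet> v) \<le> qform A v"
proof -
  have "0 < Re (conjugate v \<bullet> v)" "Im (conjugate v \<bullet> v) = 0"
    using cscalar_self_pos[OF assms(1,2)] by (auto simp: less_complex_def)
  then show ?thesis
    using assms(3) by (simp add: rayleigh_def less_eq_complex_def le_divide_eq)
qed

lemma observable_rayleigh_bounds: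
  assumes "observable d n C" "j < n" "v \<in> carrier_vec d" "v \<noteq> 0\<^sub>v d"
  shows "0 \<le> rayleigh (C j) v" "rayleigh (C j) v \<le> 1"
proof -
  have "0 \<le> qform (C j) v" "qform (C j) v \<le> conjugate v \<bullet> v"
    using observable_qform_nonneg observable_qform_le assms by auto
  then show "0 \<le> rayleigh (C j) v" "rayleigh (C j) v \<le> 1"
    using rayleigh_le_iff[OF assms(3,4)] cscalar_self_pos[OF assms(3,4)]
    by (auto simp: rayleigh_def less_eq_complex_def less_complex_def)
qed

section \<open>Convex remainders of observables\<close>

text \<open>If \<open>y = t x + (1 - t) z\<close> then \<open>z = convex_remainder t y x\<close>; the weight of \<open>x\<close> in \<open>y\<close>
  is the supremum of the \<open>t\<close> for which this remainder is still an observable.\<close>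
definition convex_remainder ::
    "real \<Rightarrow> (nat \<Rightarrow> complex mat) \<Rightarrow> (nat \<Rightarrow> complex mat) \<Rightarrow> nat \<Rightarrow> complex mat" where
  "convex_remainder t y x j = (1 / (1 - complex_of_real t)) \<cdot>\<^sub>m (y j - complex_of_real t \<cdot>\<^sub>m x j)"

lemma weight_eq_Sup:
  "weight d n y x = Sup {t. 0 \<le> t \<and> t < 1 \<and> observable d n (convex_remainder t y x)}"
  unfolding weight_def convex_remainder_def
  by (simp add: less_eq_complex_def less_complex_def)

lemma index_scaled_diff:
  assumes "A \<in> carrier_mat d d" "B \<in> carrier_mat d d" "i < d" "k < d"
  shows "(c \<cdot>\<^sub>m (A - e \<cdot>\<^sub>m B)) $$ (i,k) = c * (A $$ (i,k) - e * B $$ (i,k))"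
  using assms by simp

lemma qform_scaled_diff:
  assumes "A \<in> carrier_mat d d" "B \<in> carrier_mat d d" "v \<in> carrier_vec d"
  shows "qform (c \<cdot>\<^sub>m (A - e \<cdot>\<^sub>m B)) v = c * (qform A v - e * qform B v)"
proof -
  have "e \<cdot>\<^sub>m B \<in> carrier_mat d d" "A - e \<cdot>\<^sub>m B \<in> carrier_mat d d"
    using assms(2) by auto
  then show ?thesis
    using assms by (simp add: qform_smult qform_minus)
qed

lemma positive_op_scaled_diff:
  assumes Y: "positive_op d Y" and X: "positive_op d X" and s: "0 \<le> s"
    and dominated: "\<forall>v \<in> carrier_vec d. complex_of_real t * qform X v \<le> qform Y v"
  shows "positive_op d (complex_of_real s \<cdot>\<^sub>m (Y - complex_of_real t \<cdot>\<^sub>m X))"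
proof -
  have Yc: "Y \<in> carrier_mat d d" and Xc: "X \<in> carrier_mat d d"
    using X Y by (simp_all add: positive_op_def)
  have Z: "complex_of_real s \<cdot>\<^sub>m (Y - complex_of_real t \<cdot>\<^sub>m X) \<in> carrier_mat d d"
    using Xc by (intro smult_carrier_mat minus_carrier_mat) simp
  have "hermitian_kernel d (\<lambda>i k. (complex_of_real s \<cdot>\<^sub>m (Y - complex_of_real t \<cdot>\<^sub>m X)) $$ (i,k))"
    unfolding hermitian_kernel_def
  proof (intro allI impI)
    fix i k assume ik: "i < d" "k < d"
    have "Y $$ (k,i) = cnj (Y $$ (i,k))" "X $$ (k,i) = cnj (X $$ (i,k))"
      using X Y ik mat_adjoint_eq_iff[OF Yc] mat_adjoint_eq_iff[OF Xc]
      unfolding positive_op_def hermitian_kernel_def by blast+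
    then show "(complex_of_real s \<cdot>\<^sub>m (Y - complex_of_real t \<cdot>\<^sub>m X)) $$ (k,i)
        = cnj ((complex_of_real s \<cdot>\<^sub>m (Y - complex_of_real t \<cdot>\<^sub>m X)) $$ (i,k))"
      using ik Xc Yc by simp
  qed
  moreover have "0 \<le> qform (complex_of_real s \<cdot>\<^sub>m (Y - complex_of_real t \<cdot>\<^sub>m X)) v"
    if v: "v \<in> carrier_vec d" for v
  proof -
    have "qform (complex_of_real s \<cdot>\<^sub>m (Y - complex_of_real t \<cdot>\<^sub>m X)) v
        = complex_of_real s * (qform Y v - complex_of_real t * qform X v)"
      by (rule qform_scaled_diff[OF Yc Xc v])
    also have "0 \<le> \<dots>"
      using s dominated v by (intro mult_nonneg_nonneg) (auto simp: less_eq_complex_def)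
    finally show ?thesis .
  qed
  ultimately show ?thesis
    unfolding positive_op_iff using Z mat_adjoint_eq_iff[OF Z] by blast
qed

lemma msum_convex_remainder:
  assumes "observable d n y" "observable d n x" "t < 1"
  shows "msum d n (convex_remainder t y x) = 1\<^sub>m d"
proof -
  have yc: "\<forall>j<n. y j \<in> carrier_mat d d" and xc: "\<forall>j<n. x j \<in> carrier_mat d d"
    using assms observable_carrier by blast+
  then have zc: "\<forall>j<n. convex_remainder t y x j \<in> carrier_mat d d"
    by (auto intro!: smult_carrier_mat minus_carrier_mat simp: convex_remainder_def)
  have sums: "msum d n y = 1\<^sub>m d" "msum d n x = 1\<^sub>m d"
    using assms by (simp_all add: observable_def)
  show ?thesis
  proof (rule eq_matI)
    fix a b assume "a < dim_row (1\<^sub>m d :: complex mat)" "b < dim_col (1\<^sub>m d :: complex mat)"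
    then have ab: "a < d" "b < d" by simp_all
    have "msum d n (convex_remainder t y x) $$ (a,b)
        = (\<Sum>j<n. (1 / (1 - complex_of_real t)) * (y j $$ (a,b) - complex_of_real t * x j $$ (a,b)))"
      unfolding msum_index[OF zc ab] using yc xc
      by (intro sum.cong refl) (simp add: convex_remainder_def index_scaled_diff[OF _ _ ab])
    also have "\<dots> = (1 / (1 - complex_of_real t)) * (msum d n y $$ (a,b) - complex_of_real t * msum d n x $$ (a,b))"
      unfolding msum_index[OF yc ab] msum_index[OF xc ab]
      by (simp add: sum_divide_distrib[symmetric] sum_distrib_left sum_subtractf)
    also have "\<dots> = 1\<^sub>m d $$ (a,b)"
      using assms(3) ab unfolding sums by (simp add: field_simps)
    finally show "msum d n (convex_remainder t y x) $$ (a,b) = 1\<^sub>m d $$ (a,b)" .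
  qed (use msum_carrier[OF zc] in auto)
qed

lemma observable_convex_remainder:
  assumes y: "observable d n y" and x: "observable d n x" and t: "0 \<le> t" "t < 1"
    and dominated: "\<And>j v. j < n \<Longrightarrow> v \<in> carrier_vec d \<Longrightarrow> complex_of_real t * qform (x j) v \<le> qform (y j) v"
  shows "observable d n (convex_remainder t y x)"
proof -
  have "positive_op d (complex_of_real (1 / (1 - t)) \<cdot>\<^sub>m (y j - complex_of_real t \<cdot>\<^sub>m x j))"
    if "j < n" for j
    using y x t dominated that by (intro positive_op_scaled_diff) (auto simp: observable_def)
  then have "positive_op d (convex_remainder t y x j)" if "j < n" for j
    using that by (simp add: convex_remainder_def)
  then show ?thesis
    using msum_convex_remainder[OF y x t(2)] by (simp add: observable_def)
qed

section \<open>Base norm and boundariness\<close>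

context
  fixes d n :: nat and C :: "nat \<Rightarrow> complex mat"
  assumes d: "d \<ge> 1" and C: "observable d n C"
begin

private abbreviation (input) rayleigh_quotients where
  "rayleigh_quotients \<equiv> {rayleigh (C j) v | j v. j < n \<and> v \<in> carrier_vec d \<and> v \<noteq> 0\<^sub>v d}"

private lemma rayleigh_witness:
  obtains j and v :: "complex vec" where "j < n" "v \<in> carrier_vec d" "v \<noteq> 0\<^sub>v d"
proof (rule that[of 0 "unit_vec d 0"])
  show "0 < n" by (rule observable_length_pos[OF d C])
  show "unit_vec d 0 \<in> carrier_vec d" "(unit_vec d 0 :: complex vec) \<noteq> 0\<^sub>v d"
    using d by (auto simp: vec_eq_iff)
qed

private lemma rayleigh_set_nonempty: "rayleigh_quotients \<noteq> {}"
  by (rule rayleigh_witness) auto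

private lemma rayleigh_set_bdd_below: "bdd_below rayleigh_quotients"
  using observable_rayleigh_bounds(1)[OF C] by (intro bdd_belowI[of _ 0]) blast

lemma min_rayleigh_le_rayleigh:
  "j < n \<Longrightarrow> v \<in> carrier_vec d \<Longrightarrow> v \<noteq> 0\<^sub>v d \<Longrightarrow> min_rayleigh d n C \<le> rayleigh (C j) v"
  unfolding min_rayleigh_def by (rule cInf_lower[OF _ rayleigh_set_bdd_below]) blast

lemma min_rayleigh_bounds: "0 \<le> min_rayleigh d n C" "min_rayleigh d n C \<le> 1"
proof -
  show "0 \<le> min_rayleigh d n C"
    unfolding min_rayleigh_def
    by (rule cInf_greatest[OF rayleigh_set_nonempty]) (use observable_rayleigh_bounds(1)[OF C] in blast)
  obtain j and v :: "complex vec" where "j < n" "v \<in> carrier_vec d" "v \<noteq> 0\<^sub>v d"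
    by (rule rayleigh_witness)
  then have "min_rayleigh d n C \<le> rayleigh (C j) v" "rayleigh (C j) v \<le> 1"
    using min_rayleigh_le_rayleigh observable_rayleigh_bounds(2)[OF C] by simp_all
  then show "min_rayleigh d n C \<le> 1" by linarith
qed

lemma min_rayleigh_approx:
  assumes "e > 0"
  obtains j v where "j < n" "v \<in> carrier_vec d" "v \<noteq> 0\<^sub>v d" "rayleigh (C j) v < min_rayleigh d n C + e"
proof -
  have "Inf rayleigh_quotients < min_rayleigh d n C + e" using assms unfolding min_rayleigh_def by simp
  from cInf_lessD[OF rayleigh_set_nonempty this] show ?thesis using that by blast
qed

lemma min_rayleigh_qform_le:
  assumes "j < n" "v \<in> carrier_vec d"
  shows "complex_of_real (min_rayleigh d n C) * (conjugate v \<bullet> v) \<le> qform (C j) v"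
proof (cases "v = 0\<^sub>v d")
  case True
  then show ?thesis using observable_qform_nonneg[OF C assms] by simp
next
  case False
  have "Im (qform (C j) v) = 0"
    using observable_qform_nonneg[OF C assms] by (simp add: less_eq_complex_def)
  then show ?thesis
    using rayleigh_le_iff[OF assms(2) False] min_rayleigh_le_rayleigh[OF assms(1,2) False] by blast
qed

lemma min_rayleigh_le_mtrace:
  assumes \<rho>: "density_op d \<rho>" and j: "j < n"
  shows "complex_of_real (min_rayleigh d n C) \<le> mtrace (\<rho> * C j)"
proof -
  define m where "m = complex_of_real (min_rayleigh d n C)"
  have Cj: "C j \<in> carrier_mat d d" by (rule observable_carrier[OF C j])
  have \<rho>_carrier: "\<rho> \<in> carrier_mat d d" using \<rho> by (simp add: density_op_def positive_op_def)
  have "qform (C j - m \<cdot>\<^sub>m 1\<^sub>m d) v = qform (C j) v - m * (conjugate v \<bullet> v)"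
    if "v \<in> carrier_vec d" for v
    using that by (simp add: qform_minus[OF Cj] qform_smult[OF one_carrier_mat])
  then have "0 \<le> mtrace (\<rho> * (C j - m \<cdot>\<^sub>m 1\<^sub>m d))"
    using \<rho> min_rayleigh_qform_le[OF j]
    by (intro mtrace_positive_mult_nonneg) (auto simp: density_op_def m_def)
  also have "mtrace (\<rho> * (C j - m \<cdot>\<^sub>m 1\<^sub>m d)) = mtrace (\<rho> * C j) - m"
    using \<rho> by (simp add: mtrace_mult_minus[OF \<rho>_carrier Cj] mtrace_mult_smult[OF \<rho>_carrier]
        right_mult_one_mat[OF \<rho>_carrier] density_op_def)
  finally show ?thesis unfolding m_def by simp
qed

lemma mtrace_observable_diff_bound:
  assumes A: "observable d n A" and \<rho>: "density_op d \<rho>"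
  shows "(\<Sum>j<n. cmod (mtrace (\<rho> * (C j - A j)))) \<le> 2 - 2 * min_rayleigh d n C"
proof -
  have \<rho>_carrier: "\<rho> \<in> carrier_mat d d" using \<rho> by (simp add: density_op_def positive_op_def)
  define c where "c j = Re (mtrace (\<rho> * C j))" for j
  define a where "a j = Re (mtrace (\<rho> * A j))" for j
  have C_ge: "complex_of_real (min_rayleigh d n C) \<le> mtrace (\<rho> * C j)" if "j < n" for j
    by (rule min_rayleigh_le_mtrace[OF \<rho> that])
  have A_ge: "0 \<le> mtrace (\<rho> * A j)" if "j < n" for j
    by (rule observable_mtrace_nonneg[OF A \<rho> that])
  have "cmod (mtrace (\<rho> * (C j - A j))) = \<bar>c j - a j\<bar>" if j: "j < n" for j
    using C_ge[OF j] A_ge[OF j]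
    by (simp add: mtrace_mult_minus[OF \<rho>_carrier observable_carrier[OF C j] observable_carrier[OF A j]]
        cmod_eq_Re less_eq_complex_def c_def a_def)
  then have "(\<Sum>j<n. cmod (mtrace (\<rho> * (C j - A j)))) = (\<Sum>j<n. \<bar>c j - a j\<bar>)"
    by simp
  also have "\<dots> \<le> 2 - 2 * min_rayleigh d n C"
  proof (rule sum_abs_diff_le)
    show "min_rayleigh d n C \<le> c j" "0 \<le> a j" if "j < n" for j
      using C_ge[OF that] A_ge[OF that] by (simp_all add: c_def a_def less_eq_complex_def)
    show "(\<Sum>j<n. c j) = 1" "(\<Sum>j<n. a j) = 1"
      unfolding c_def a_def Re_sum[symmetric] observable_mtrace_sum[OF C \<rho>] observable_mtrace_sum[OF A \<rho>]
      by simp_all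
  qed (rule min_rayleigh_bounds)+
  finally show ?thesis .
qed

lemma obs_dist_le:
  assumes "observable d n A"
  shows "obs_dist d n C A \<le> 2 - 2 * min_rayleigh d n C"
  unfolding obs_dist_def
  by (rule cSUP_least[OF density_ops_nonempty[OF d]]) (use mtrace_observable_diff_bound[OF assms] in auto)

lemma pure_state_deterministic_obs_diff:
  assumes j0: "j0 < n" and v: "v \<in> carrier_vec d" "v \<noteq> 0\<^sub>v d"
  defines "\<rho> \<equiv> pure_state d v"
  shows "(\<Sum>k<n. cmod (mtrace (\<rho> * (C k - deterministic_obs d j0 k)))) = 2 - 2 * rayleigh (C j0) v"
proof -
  define c where "c k = Re (mtrace (\<rho> * C k))" for k
  have \<rho>: "density_op d \<rho>" unfolding \<rho>_def by (rule density_op_pure_state[OF v])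
  have \<rho>_carrier: "\<rho> \<in> carrier_mat d d" by (simp add: \<rho>_def pure_state_carrier)
  have D: "observable d n (deterministic_obs d j0)" by (rule observable_deterministic_obs[OF j0])
  have C_nonneg: "0 \<le> mtrace (\<rho> * C k)" if "k < n" for k
    by (rule observable_mtrace_nonneg[OF C \<rho> that])
  have c_sum: "(\<Sum>k<n. c k) = 1"
    unfolding c_def Re_sum[symmetric] observable_mtrace_sum[OF C \<rho>] by simp
  have c_le: "c k \<le> 1" if "k < n" for k
    unfolding c_sum[symmetric] using C_nonneg
    by (intro member_le_sum) (auto simp: c_def less_eq_complex_def that)
  have "cmod (mtrace (\<rho> * (C k - deterministic_obs d j0 k))) = (if k = j0 then 1 - c k else c k)"
    if k: "k < n" for k
  proof -
    have "mtrace (\<rho> * (C k - deterministic_obs d j0 k)) = mtrace (\<rho> * C k) - (if k = j0 then 1 else 0)"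
      by (simp add: mtrace_mult_minus[OF \<rho>_carrier observable_carrier[OF C k] observable_carrier[OF D k]]
          mtrace_mult_deterministic_obs[OF \<rho>])
    then show ?thesis
      using C_nonneg[OF k] c_le[OF k]
      by (cases "k = j0") (simp_all add: cmod_eq_Re less_eq_complex_def c_def)
  qed
  then have "(\<Sum>k<n. cmod (mtrace (\<rho> * (C k - deterministic_obs d j0 k))))
      = (\<Sum>k<n. c k + (if k = j0 then 1 - 2 * c k else 0))"
    by (intro sum.cong) auto
  also have "\<dots> = (\<Sum>k<n. c k) + 1 - 2 * c j0"
    using j0 by (simp add: sum.distrib)
  also have "\<dots> = 2 - 2 * rayleigh (C j0) v"
  proof -
    have "Im (conjugate v \<bullet> v) = 0" using cscalar_self_nonneg[OF v(1)] by (simp add: less_eq_complex_def)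
    then have "c j0 = rayleigh (C j0) v"
      unfolding c_def \<rho>_def mtrace_pure_state_mult[OF v(1) observable_carrier[OF C j0]] rayleigh_def
      by (simp add: Re_divide complex_eq_iff power2_eq_square)
    then show ?thesis using c_sum by simp
  qed
  finally show ?thesis .
qed

lemma obs_dist_deterministic_obs_ge:
  assumes j0: "j0 < n" and v: "v \<in> carrier_vec d" "v \<noteq> 0\<^sub>v d"
  shows "2 - 2 * rayleigh (C j0) v \<le> obs_dist d n C (deterministic_obs d j0)"
  unfolding obs_dist_def pure_state_deterministic_obs_diff[OF assms, symmetric]
  by (rule cSUP_upper)
    (use density_op_pure_state[OF v] mtrace_observable_diff_bound[OF observable_deterministic_obs[OF j0]]
      in \<open>auto intro!: bdd_aboveI2\<close>)

lemma SUP_obs_dist_eq: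
  "(SUP A \<in> {A. observable d n A}. obs_dist d n C A) = 2 - 2 * min_rayleigh d n C"
proof (rule antisym)
  show "(SUP A \<in> {A. observable d n A}. obs_dist d n C A) \<le> 2 - 2 * min_rayleigh d n C"
    by (rule cSUP_least) (use C obs_dist_le in auto)
  show "2 - 2 * min_rayleigh d n C \<le> (SUP A \<in> {A. observable d n A}. obs_dist d n C A)"
  proof (rule field_le_epsilon)
    fix e :: real assume "e > 0"
    then have "e / 2 > 0" by simp
    then obtain j v where jv: "j < n" "v \<in> carrier_vec d" "v \<noteq> 0\<^sub>v d"
      and "rayleigh (C j) v < min_rayleigh d n C + e / 2"
      by (rule min_rayleigh_approx)
    moreover have "obs_dist d n C (deterministic_obs d j) \<le> (SUP A \<in> {A. observable d n A}. obs_dist d n C A)"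
      using observable_deterministic_obs[OF jv(1)] obs_dist_le
      by (intro cSUP_upper bdd_aboveI2) auto
    ultimately show "2 - 2 * min_rayleigh d n C \<le> (SUP A \<in> {A. observable d n A}. obs_dist d n C A) + e"
      using obs_dist_deterministic_obs_ge[OF jv] by simp
  qed
qed

lemma weight_ge_min_rayleigh:
  assumes X: "observable d n X"
  shows "min_rayleigh d n C \<le> weight d n C X"
proof -
  define T where "T = {t. 0 \<le> t \<and> t < 1 \<and> observable d n (convex_remainder t C X)}"
  have T_bdd: "bdd_above T" unfolding T_def by (intro bdd_aboveI[of _ 1]) auto
  have T_mem: "t \<in> T" if t: "0 \<le> t" "t < 1" "t \<le> min_rayleigh d n C" for t
  proof -
    have "complex_of_real t * qform (X j) v \<le> qform (C j) v" if "j < n" "v \<in> carrier_vec d" for j v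
    proof -
      have "complex_of_real t * qform (X j) v \<le> complex_of_real t * (conjugate v \<bullet> v)"
        using t(1) observable_qform_le[OF X that] by (intro mult_left_mono) (auto simp: less_eq_complex_def)
      also have "\<dots> \<le> complex_of_real (min_rayleigh d n C) * (conjugate v \<bullet> v)"
        using t(3) cscalar_self_nonneg[OF that(2)] by (intro mult_right_mono) (auto simp: less_eq_complex_def)
      also have "\<dots> \<le> qform (C j) v"
        by (rule min_rayleigh_qform_le[OF that])
      finally show ?thesis .
    qed
    then show ?thesis unfolding T_def using observable_convex_remainder[OF C X t(1,2)] t by blast
  qed
  show ?thesis
    unfolding weight_eq_Sup T_def[symmetric]
  proof (rule field_le_epsilon)
    fix e :: real assume e: "e > 0"
    show "min_rayleigh d n C \<le> Sup T + e"
    proof (cases "min_rayleigh d n C \<le> e")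
      case True
      have "0 \<le> Sup T" by (rule cSup_upper[OF T_mem T_bdd]) (use min_rayleigh_bounds in auto)
      then show ?thesis using True by simp
    next
      case False
      have "min_rayleigh d n C - e \<le> Sup T"
        by (rule cSup_upper[OF T_mem T_bdd]) (use False e min_rayleigh_bounds in auto)
      then show ?thesis by simp
    qed
  qed
qed

lemma weight_deterministic_obs_le:
  assumes j0: "j0 < n" and v: "v \<in> carrier_vec d" "v \<noteq> 0\<^sub>v d"
  shows "weight d n C (deterministic_obs d j0) \<le> rayleigh (C j0) v"
  unfolding weight_eq_Sup
proof (rule cSup_least)
  show "{t. 0 \<le> t \<and> t < 1 \<and> observable d n (convex_remainder t C (deterministic_obs d j0))} \<noteq> {}"
    using observable_convex_remainder[OF C observable_deterministic_obs[OF j0], of 0]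
      observable_qform_nonneg[OF C] by force
next
  fix t assume "t \<in> {t. 0 \<le> t \<and> t < 1 \<and> observable d n (convex_remainder t C (deterministic_obs d j0))}"
  then have t: "0 \<le> t" "t < 1"
    and pos: "positive_op d (convex_remainder t C (deterministic_obs d j0) j0)"
    using j0 by (auto simp: observable_def)
  have Cj0: "C j0 \<in> carrier_mat d d" by (rule observable_carrier[OF C j0])
  have "0 \<le> qform (convex_remainder t C (deterministic_obs d j0) j0) v"
    using pos v by (simp add: positive_op_iff)
  also have "qform (convex_remainder t C (deterministic_obs d j0) j0) v
      = complex_of_real (1 / (1 - t)) * (qform (C j0) v - complex_of_real t * (conjugate v \<bullet> v))"
    using qform_scaled_diff[OF Cj0 one_carrier_mat v(1)] one_mult_mat_vec[OF v(1)]
    by (simp add: convex_remainder_def deterministic_obs_def)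
  finally have "complex_of_real t * (conjugate v \<bullet> v) \<le> qform (C j0) v"
    using t by (auto simp: less_eq_complex_def zero_le_divide_iff)
  moreover have "Im (qform (C j0) v) = 0"
    using observable_qform_nonneg[OF C j0 v(1)] by (simp add: less_eq_complex_def)
  ultimately show "t \<le> rayleigh (C j0) v"
    using rayleigh_le_iff[OF v] by blast
qed

lemma boundariness_eq_min_rayleigh: "boundariness d n C = min_rayleigh d n C"
  unfolding boundariness_def
proof (rule antisym)
  show "min_rayleigh d n C \<le> (INF X \<in> {X. observable d n X}. weight d n C X)"
    by (rule cINF_greatest) (use C weight_ge_min_rayleigh in auto)
  show "(INF X \<in> {X. observable d n X}. weight d n C X) \<le> min_rayleigh d n C"
  proof (rule field_le_epsilon)
    fix e :: real assume "e > 0"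
    then obtain j v where jv: "j < n" "v \<in> carrier_vec d" "v \<noteq> 0\<^sub>v d"
      and "rayleigh (C j) v < min_rayleigh d n C + e"
      by (rule min_rayleigh_approx)
    moreover have "(INF X \<in> {X. observable d n X}. weight d n C X) \<le> weight d n C (deterministic_obs d j)"
      using observable_deterministic_obs[OF jv(1)] weight_ge_min_rayleigh
      by (intro cINF_lower bdd_belowI2) auto
    ultimately show "(INF X \<in> {X. observable d n X}. weight d n C X) \<le> min_rayleigh d n C + e"
      using weight_deterministic_obs_le[OF jv] by simp
  qed
qed

end

theorem proposition8:
  fixes d n :: nat and C :: "nat \<Rightarrow> complex mat"
  assumes "d \<ge> 1"
    and "observable d n C"
  shows "(SUP A \<in> {A. observable d n A}. obs_dist d n C A) = 2 * (1 - boundariness d n C)"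
  using SUP_obs_dist_eq[OF assms] boundariness_eq_min_rayleigh[OF assms] by simp

end
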